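(* In a synchronized communication system, the uncovering-resilience equals $k-1$, where $k$ is the minimum, over all rings of the system, of the number of robots in the ring (in the system before any robot leaves).
   Context: Model. A system consists of pairwise disjoint unit circles $C_1,\dots,C_n$ in the plane (trajectories) and a communication range $r>0$. Its communication graph $G$ has vertex set $\{C_1,\dots,C_n\}$, $C_i,C_j$ adjacent iff the distance between their centres is at most $2+r$. Positions on a circle are angles (mod $2\pi$). For an edge $(i,j)$, the link position $\phi_{ij}$ is the angle of the point of $C_i$ closest to $C_j$. A schedule $F=(f,g)$ assigns each circle a starting angle $f(C_i)$ and direction $g(C_i)\in\{1,-1\}$; a robot following it on $C_i$ is at $f(C_i)+g(C_i)2\pi t$ at time $t$. $F$ is a synchronization schedule if $g(C_i)=-g(C_j)$ for adjacent circles and robots following $F$ on adjacent $C_i,C_j$ are at $\phi_{ij},\phi_{ji}$ at exactly the same times. A synchronized communication system (SCS) consists of $n$ robots, initially one per circle, following a synchronization schedule, with the switching rule: when a robot on $C_i$ reaches $\phi_{ij}$ and $C_j$ is empty, it instantly passes to $C_j$ and follows the schedule of $C_j$; if $C_j$ has a robot, they meet and each stays on its circle. A partial SCS arises by letting some robots leave (possibly at different times). A trajectory is covered if every point of it is visited periodically by the surviving robots. The uncovering-resilience of an SCS is the largest $k$ such that, whichever $k$ robots leave, all trajectories remain covered. Rings. Trace a point moving along a circle $C_i$ in direction $g(C_i)$; whenever it reaches a link position $\phi_{ij}$ of its current circle, it passes to $C_j$ at $\phi_{ji}$ and continues in direction $g(C_j)$. The closed curve traced is a ring; the circles decompose into rings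 overlapping only at link positions. A robot is in a ring if it lies on a point of that ring. *)

theory Defs
  imports "HOL-Analysis.Analysis"
begin

text \<open>The plane is modelled as the complex numbers. Circles are indexed by
  0..<n; circle i is the unit circle centred at c i. A schedule is given by
  f (starting angles) and g (directions in {1,-1}).\<close>

definition adj :: "nat \<Rightarrow> (nat \<Rightarrow> complex) \<Rightarrow> real \<Rightarrow> nat \<Rightarrow> nat \<Rightarrow> bool" where
  "adj n c r i j \<longleftrightarrow> i < n \<and> j < n \<and> i \<noteq> j \<and> cmod (c i - c j) \<le> 2 + r"

definition linkpt :: "(nat \<Rightarrow> complex) \<Rightarrow> nat \<Rightarrow> nat \<Rightarrow> complex" where
  "linkpt c i j = c i + (c j - c i) / complex_of_real (cmod (c j - c i))"

definition pos :: "(nat \<Rightarrow> complex) \<Rightarrow> (nat \<Rightarrow> real) \<Rightarrow> (nat \<Rightarrow> int) \<Rightarrow> nat \<Rightarrow> real \<Rightarrow> complex" where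
  "pos c f g i t = c i + cis (f i + real_of_int (g i) * 2 * pi * t)"

definition sync_schedule ::
  "nat \<Rightarrow> (nat \<Rightarrow> complex) \<Rightarrow> real \<Rightarrow> (nat \<Rightarrow> real) \<Rightarrow> (nat \<Rightarrow> int) \<Rightarrow> bool" where
  "sync_schedule n c r f g \<longleftrightarrow>
     (\<forall>i<n. g i = 1 \<or> g i = -1) \<and>
     (\<forall>i j. adj n c r i j \<longrightarrow> g i = - g j \<and>
        (\<forall>t. pos c f g i t = linkpt c i j \<longleftrightarrow> pos c f g j t = linkpt c j i))"

definition at_link ::
  "nat \<Rightarrow> (nat \<Rightarrow> complex) \<Rightarrow> real \<Rightarrow> (nat \<Rightarrow> real) \<Rightarrow> (nat \<Rightarrow> int) \<Rightarrow> nat \<Rightarrow> nat \<Rightarrow> real \<Rightarrow> bool" where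
  "at_link n c r f g i j t \<longleftrightarrow> adj n c r i j \<and> pos c f g i t = linkpt c i j"

definition pwc :: "real \<Rightarrow> (real \<Rightarrow> 'b) \<Rightarrow> bool" where
  "pwc s x \<longleftrightarrow>
     (\<forall>t\<ge>s. \<exists>e>0. \<forall>u. t \<le> u \<and> u < t + e \<longrightarrow> x u = x t) \<and>
     (\<forall>t>s. \<exists>e>0. \<exists>v. \<forall>u. t - e < u \<and> u < t \<longrightarrow> x u = v)"

definition leftval :: "(real \<Rightarrow> 'b) \<Rightarrow> real \<Rightarrow> 'b" where
  "leftval x t = (SOME v. \<exists>e>0. \<forall>u. t - e < u \<and> u < t \<longrightarrow> x u = v)"

text \<open>A point starting on circle i at the schedule position of
  time s, moving along its current circle in the scheduled direction at the
  scheduled speed, and passing to C_j at every link position phi_ij it reaches.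
  tok t is the circle the tracing point is on at time t (right-continuous);
  by synchronization, the tracing point is then at pos c f g (tok t) t.\<close>
definition ring_trace ::
  "nat \<Rightarrow> (nat \<Rightarrow> complex) \<Rightarrow> real \<Rightarrow> (nat \<Rightarrow> real) \<Rightarrow> (nat \<Rightarrow> int) \<Rightarrow> nat \<Rightarrow> real \<Rightarrow> (real \<Rightarrow> nat) \<Rightarrow> bool" where
  "ring_trace n c r f g i s tok \<longleftrightarrow>
     tok s = i \<and> pwc s tok \<and>
     (\<forall>t>s. (\<forall>j. at_link n c r f g (leftval tok t) j t \<longrightarrow> tok t = j) \<and>
            ((\<forall>j. \<not> at_link n c r f g (leftval tok t) j t) \<longrightarrow> tok t = leftval tok t))"

definition ring_points ::
  "(nat \<Rightarrow> complex) \<Rightarrow> (nat \<Rightarrow> real) \<Rightarrow> (nat \<Rightarrow> int) \<Rightarrow> real \<Rightarrow> (real \<Rightarrow> nat) \<Rightarrow> (nat \<times> complex) set" where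
  "ring_points c f g s tok = {(tok t, pos c f g (tok t) t) | t. t \<ge> s}"

definition rings ::
  "nat \<Rightarrow> (nat \<Rightarrow> complex) \<Rightarrow> real \<Rightarrow> (nat \<Rightarrow> real) \<Rightarrow> (nat \<Rightarrow> int) \<Rightarrow> (nat \<times> complex) set set" where
  "rings n c r f g =
     {ring_points c f g s tok | i s tok. i < n \<and> ring_trace n c r f g i s tok}"

text \<open>Robots (indexed by their initial circle m) lying in ring R at time 0.\<close>
definition robots_in_ring ::
  "nat \<Rightarrow> (nat \<Rightarrow> complex) \<Rightarrow> (nat \<Rightarrow> real) \<Rightarrow> (nat \<Rightarrow> int) \<Rightarrow> (nat \<times> complex) set \<Rightarrow> nat set" where
  "robots_in_ring n c f g R = {m. m < n \<and> (m, pos c f g m 0) \<in> R}"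

text \<open>Robot m starts on C_m; robots in L leave at
  time tau m (absent at all times t \<ge> tau m). loc m t = Some i means robot m
  is on circle i at time t (hence at position pos c f g i t); None means it has left.\<close>
definition occupied_before :: "nat \<Rightarrow> (nat \<Rightarrow> real \<Rightarrow> nat option) \<Rightarrow> nat \<Rightarrow> real \<Rightarrow> bool" where
  "occupied_before n loc j t \<longleftrightarrow> (\<exists>m<n. leftval (loc m) t = Some j)"

definition scs_run ::
  "nat \<Rightarrow> (nat \<Rightarrow> complex) \<Rightarrow> real \<Rightarrow> (nat \<Rightarrow> real) \<Rightarrow> (nat \<Rightarrow> int) \<Rightarrow>
   nat set \<Rightarrow> (nat \<Rightarrow> real) \<Rightarrow> (nat \<Rightarrow> real \<Rightarrow> nat option) \<Rightarrow> bool" where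
  "scs_run n c r f g L tau loc \<longleftrightarrow>
     (\<forall>m<n. pwc 0 (loc m) \<and>
        (\<forall>t\<ge>0. loc m t = None \<longleftrightarrow> (m \<in> L \<and> tau m \<le> t)) \<and>
        (\<not> (m \<in> L \<and> tau m \<le> 0) \<longrightarrow> loc m 0 = Some m) \<and>
        (\<forall>t>0. \<forall>i. loc m t \<noteq> None \<longrightarrow> leftval (loc m) t = Some i \<longrightarrow>
           (\<forall>j. at_link n c r f g i j t \<and> \<not> occupied_before n loc j t \<longrightarrow> loc m t = Some j) \<and>
           ((\<forall>j. \<not> (at_link n c r f g i j t \<and> \<not> occupied_before n loc j t)) \<longrightarrow> loc m t = Some i)))"

definition covered ::
  "nat \<Rightarrow> (nat \<Rightarrow> complex) \<Rightarrow> (nat \<Rightarrow> real) \<Rightarrow> (nat \<Rightarrow> int) \<Rightarrow> (nat \<Rightarrow> real \<Rightarrow> nat option) \<Rightarrow> bool" where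
  "covered n c f g loc \<longleftrightarrow>
     (\<forall>i<n. \<forall>p. cmod (p - c i) = 1 \<longrightarrow>
        (\<forall>T. \<exists>t\<ge>T. \<exists>m<n. loc m t = Some i \<and> pos c f g i t = p))"

definition resilient ::
  "nat \<Rightarrow> (nat \<Rightarrow> complex) \<Rightarrow> real \<Rightarrow> (nat \<Rightarrow> real) \<Rightarrow> (nat \<Rightarrow> int) \<Rightarrow> nat \<Rightarrow> bool" where
  "resilient n c r f g k \<longleftrightarrow>
     (\<forall>L tau loc. L \<subseteq> {..<n} \<and> card L \<le> k \<and> (\<forall>m. 0 \<le> tau m) \<and>
        scs_run n c r f g L tau loc \<longrightarrow> covered n c f g loc)"

definition uncovering_resilience ::
  "nat \<Rightarrow> (nat \<Rightarrow> complex) \<Rightarrow> real \<Rightarrow> (nat \<Rightarrow> real) \<Rightarrow> (nat \<Rightarrow> int) \<Rightarrow> int \<Rightarrow> bool" where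
  "uncovering_resilience n c r f g x \<longleftrightarrow> x \<in> {int k | k. resilient n c r f g k} \<and> (\<forall>y \<in> {int k | k. resilient n c r f g k}. y \<le> x)"

definition min_ring_robots ::
  "nat \<Rightarrow> (nat \<Rightarrow> complex) \<Rightarrow> real \<Rightarrow> (nat \<Rightarrow> real) \<Rightarrow> (nat \<Rightarrow> int) \<Rightarrow> nat \<Rightarrow> bool" where
  "min_ring_robots n c r f g k \<longleftrightarrow>
     (\<exists>R \<in> rings n c r f g. card (robots_in_ring n c f g R) = k) \<and>
     (\<forall>R \<in> rings n c r f g. k \<le> card (robots_in_ring n c f g R))"

end

theory Submission
  imports Defs "HOL-Combinatorics.Orbits" "HOL-Combinatorics.Cycles"
begin

text \<open>At time t the active links pair up circles, giving an involution link_swap t.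
  A robot passes over a link unless the target circle is occupied, so by the
  pairing argument of switch_image the set of occupied circles moves by link_swap t,
  exactly like the points tracing the rings. Hence, once all departures are over,
  the occupied set is carried along by the composite transport s t of the swaps.
  The schedule has period 1, so the rings correspond to the cycles of the period
  permutation transport 0 1, and the robots of a ring are those whose start circle
  lies on its cycle (robot m is back at its start point only at integer times).
  If fewer robots leave than the smallest cycle has, the n - |L| occupied ring
  positions meet every cycle, so every point is revisited in every later period.
  If all robots of a smallest cycle C leave at time 0, the survivors stay on the
  transport of the complement of C, and the start point of a circle in C is never
  visited again.\<close>

lemma Int_not_empty_if_card_gt:
  assumes "finite U" "A \<subseteq> U" "B \<subseteq> U" "card U < card A + card B"
  shows "A \<inter> B \<noteq> {}"
proof
  assume "A \<inter> B = {}"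
  with assms(1-3) have "card A + card B = card (A \<union> B)"
    by (simp add: card_Un_disjoint finite_subset)
  also have "\<dots> \<le> card U"
    using assms(1-3) by (simp add: card_mono)
  finally show False using assms(4) by simp
qed

definition switch :: "('a \<Rightarrow> 'a) \<Rightarrow> 'a set \<Rightarrow> 'a \<Rightarrow> 'a" where
  "switch \<sigma> A x = (if \<sigma> x \<notin> A then \<sigma> x else x)"

text \<open>Blocked agents come in pairs {x, \<sigma> x}, which an involution \<sigma> maps to
  themselves; so the occupied set moves as if every agent had switched.\<close>

lemma switch_image:
  assumes "\<And>x. \<sigma> (\<sigma> x) = x"
  shows "switch \<sigma> A ` A = \<sigma> ` A"
proof (intro equalityI subsetI)
  fix y assume "y \<in> switch \<sigma> A ` A"
  then obtain x where "x \<in> A" "y = switch \<sigma> A x" by blast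
  with assms show "y \<in> \<sigma> ` A"
    unfolding switch_def by (cases "\<sigma> x \<in> A") (auto intro: image_eqI[of _ _ "\<sigma> x"])
next
  fix y assume "y \<in> \<sigma> ` A"
  then obtain x where "x \<in> A" "y = \<sigma> x" by blast
  with assms show "y \<in> switch \<sigma> A ` A"
    unfolding switch_def by (cases "\<sigma> x \<in> A") (auto intro: image_eqI[of _ _ "\<sigma> x"])
qed

lemma inj_on_switch:
  assumes "\<And>x. \<sigma> (\<sigma> x) = x"
  shows "inj_on (switch \<sigma> A) A"
proof (rule inj_onI)
  fix x y assume "x \<in> A" "y \<in> A" "switch \<sigma> A x = switch \<sigma> A y"
  with assms show "x = y"
    unfolding switch_def by (cases "\<sigma> x \<in> A"; cases "\<sigma> y \<in> A") (auto dest: arg_cong[of _ _ \<sigma>])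
qed

lemma sorted_list_of_set_eqI:
  fixes A :: "'a::linorder set"
  assumes "sorted_wrt (<) xs" "set xs = A"
  shows "sorted_list_of_set A = xs"
  using assms strict_sorted_equal[OF strict_sorted_list_of_set]
  by (metis List.finite_set sorted_list_of_set(1))

lemma sorted_list_of_set_Un_less:
  fixes A B :: "'a::linorder set"
  assumes "finite A" "finite B" "\<forall>a\<in>A. \<forall>b\<in>B. a < b"
  shows "sorted_list_of_set (A \<union> B) = sorted_list_of_set A @ sorted_list_of_set B"
  by (rule sorted_list_of_set_eqI) (use assms in \<open>auto simp: sorted_wrt_append\<close>)

lemma sorted_list_of_set_image_add:
  fixes A :: "'a::linordered_ab_group_add set"
  assumes "finite A"
  shows "sorted_list_of_set ((\<lambda>x. x + d) ` A) = map (\<lambda>x. x + d) (sorted_list_of_set A)"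
  by (rule sorted_list_of_set_eqI) (use assms in \<open>auto simp: sorted_wrt_map\<close>)

lemma cis_eq_iff_int:
  "cis a = cis b \<longleftrightarrow> (\<exists>z::int. a = b + of_int z * 2 * pi)"
proof
  assume "cis a = cis b"
  then have "cos (a - b) = 1"
    by (metis cis.sel(1) cis_divide divide_self_if one_complex.sel(1) cis_neq_zero)
  then show "\<exists>z::int. a = b + of_int z * 2 * pi"
    by (auto simp: cos_one_2pi_int algebra_simps)
next
  assume "\<exists>z::int. a = b + of_int z * 2 * pi"
  then obtain z :: int where "a = b + 2 * pi * of_int z" by (auto simp: mult_ac)
  then have "cis a = cis b * cis (2 * pi * of_int z)"
    unfolding cis_mult by simp
  also have "cis (2 * pi * of_int z) = 1" by simp
  finally show "cis a = cis b" by simp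
qed

lemma permutation_orbit_funpow_ge:
  assumes "permutation p" "y \<in> orbit p x"
  obtains N where "B \<le> N" "(p ^^ N) x = y"
proof -
  obtain M where M: "y = (p ^^ M) x"
    using assms(2) unfolding orbit_altdef by blast
  obtain d where d: "p ^^ d = id" "B < d"
    using permutation_is_nilpotent'[OF assms(1)] by blast
  have "(p ^^ (d + M)) x = y" by (simp add: funpow_add d(1) M)
  moreover have "B \<le> d + M" using d(2) by simp
  ultimately show ?thesis using that by blast
qed

section \<open>Piecewise constant functions\<close>

lemma leftval_eqI:
  assumes "\<forall>\<^sub>F u in at_left t. x u = v"
  shows "leftval x t = v"
proof -
  from assms obtain b where b: "b < t" "\<forall>u>b. u < t \<longrightarrow> x u = v"
    by (auto simp: eventually_at_left_field)
  have "\<exists>e>0. \<forall>u. t - e < u \<and> u < t \<longrightarrow> x u = v"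
    using b by (intro exI[of _ "t - b"]) auto
  then have "\<exists>e>0. \<forall>u. t - e < u \<and> u < t \<longrightarrow> x u = leftval x t"
    unfolding leftval_def by (rule someI_ex[of "\<lambda>v. \<exists>e>0. \<forall>u. t - e < u \<and> u < t \<longrightarrow> x u = v", OF exI])
  then obtain e where e: "e > 0" "\<forall>u. t - e < u \<and> u < t \<longrightarrow> x u = leftval x t"
    by blast
  define m where "m = min e (t - b)"
  have "0 < m" "m \<le> e" "m \<le> t - b"
    using e(1) b(1) unfolding m_def by auto
  then have "t - e < t - m / 2" "t - m / 2 < t" "b < t - m / 2"
    by linarith+
  then have "x (t - m / 2) = leftval x t" "x (t - m / 2) = v"
    using e(2) b(2) by auto
  then show ?thesis by simp
qed

lemma pwc_eventually_right:
  assumes "pwc s x" "s \<le> t"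
  shows "\<forall>\<^sub>F u in at_right t. x u = x t"
proof -
  have "\<forall>t\<ge>s. \<exists>e>0. \<forall>u. t \<le> u \<and> u < t + e \<longrightarrow> x u = x t"
    using assms(1) unfolding pwc_def by (rule conjunct1)
  then have "\<exists>e>0. \<forall>u. t \<le> u \<and> u < t + e \<longrightarrow> x u = x t"
    using assms(2) by simp
  then obtain e where e: "e > 0" "\<forall>u. t \<le> u \<and> u < t + e \<longrightarrow> x u = x t"
    by (elim exE conjE)
  show ?thesis
    unfolding eventually_at_right_field
  proof (intro exI[of _ "t + e"] conjI allI impI)
    fix u assume "t < u" "u < t + e"
    then show "x u = x t" using e(2) less_imp_le by blast
  qed (use e(1) in simp)
qed

lemma pwc_eventually_left:
  assumes "pwc s x" "s < t"
  shows "\<forall>\<^sub>F u in at_left t. x u = leftval x t"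
proof -
  have "\<forall>t>s. \<exists>e>0. \<exists>v. \<forall>u. t - e < u \<and> u < t \<longrightarrow> x u = v"
    using assms(1) unfolding pwc_def by (rule conjunct2)
  then have "\<exists>e>0. \<exists>v. \<forall>u. t - e < u \<and> u < t \<longrightarrow> x u = v"
    using assms(2) by simp
  then obtain e v where e: "e > 0" "\<forall>u. t - e < u \<and> u < t \<longrightarrow> x u = v"
    by (elim exE conjE)
  then have ev: "\<forall>\<^sub>F u in at_left t. x u = v"
    unfolding eventually_at_left_field by (intro exI[of _ "t - e"]) auto
  with leftval_eqI[OF ev] show ?thesis by simp
qed

lemma pwcI:
  assumes "\<And>t. t \<ge> s \<Longrightarrow> \<forall>\<^sub>F u in at_right t. x u = x t"
    and "\<And>t. t > s \<Longrightarrow> \<exists>v. \<forall>\<^sub>F u in at_left t. x u = v"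
  shows "pwc s x"
  unfolding pwc_def
proof safe
  fix t assume "t \<ge> s"
  from assms(1)[OF this] obtain b where "b > t" "\<forall>u>t. u < b \<longrightarrow> x u = x t"
    by (auto simp: eventually_at_right_field)
  then show "\<exists>e>0. \<forall>u. t \<le> u \<and> u < t + e \<longrightarrow> x u = x t"
  proof (intro exI[of _ "b - t"] conjI allI impI)
    fix u assume "t \<le> u \<and> u < t + (b - t)"
    then have "u = t \<or> (t < u \<and> u < b)" by auto
    then show "x u = x t" using \<open>\<forall>u>t. u < b \<longrightarrow> x u = x t\<close> by blast
  qed (use \<open>b > t\<close> in auto)
next
  fix t assume "t > s"
  from assms(2)[OF this] obtain v b where "b < t" "\<forall>u>b. u < t \<longrightarrow> x u = v"
    by (auto simp: eventually_at_left_field)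
  then show "\<exists>e>0. \<exists>v. \<forall>u. t - e < u \<and> u < t \<longrightarrow> x u = v"
    by (intro exI[of _ "t - b"]) auto
qed

text \<open>Real induction; the proof argues at the infimum of the counterexamples.\<close>

lemma real_induct:
  fixes s t :: real
  assumes "Q s"
    and left: "\<And>t. s < t \<Longrightarrow> \<forall>\<^sub>F u in at_left t. Q u \<Longrightarrow> Q t"
    and right: "\<And>t. s \<le> t \<Longrightarrow> Q t \<Longrightarrow> \<forall>\<^sub>F u in at_right t. Q u"
    and "s \<le> t"
  shows "Q t"
proof (rule ccontr)
  assume "\<not> Q t"
  define A where "A = {u. s \<le> u \<and> \<not> Q u}"
  define T where "T = Inf A"
  have A: "A \<noteq> {}" "bdd_below A"
    using \<open>\<not> Q t\<close> \<open>s \<le> t\<close> unfolding A_def bdd_below_def by auto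
  have "s \<le> T"
    unfolding T_def using A by (intro cInf_greatest) (auto simp: A_def)
  have below: "Q u" if "s \<le> u" "u < T" for u
    using cInf_lower[OF _ A(2), of u] that unfolding A_def T_def by force
  have "Q T"
  proof (cases "T = s")
    case False
    with \<open>s \<le> T\<close> have "s < T" by simp
    moreover have "\<forall>\<^sub>F u in at_left T. Q u"
      unfolding eventually_at_left_field using \<open>s < T\<close> below
      by (intro exI[of _ s]) auto
    ultimately show ?thesis by (rule left)
  qed (use \<open>Q s\<close> in simp)
  then obtain b where b: "T < b" "\<forall>u>T. u < b \<longrightarrow> Q u"
    using right[OF \<open>s \<le> T\<close>] by (auto simp: eventually_at_right_field)
  have "b \<le> x" if "x \<in> A" for x
  proof -
    have "T \<le> x" using cInf_lower[OF that A(2)] unfolding T_def .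
    show ?thesis
    proof (rule ccontr)
      assume "\<not> b \<le> x"
      with b \<open>T \<le> x\<close> \<open>Q T\<close> have "Q x" by (cases "x = T") auto
      with that show False unfolding A_def by simp
    qed
  qed
  then have "b \<le> T" unfolding T_def using A(1) by (intro cInf_greatest)
  with b(1) show False by simp
qed

section \<open>Link swaps and transport along the rings\<close>

locale sync_system =
  fixes n :: nat and c :: "nat \<Rightarrow> complex" and r :: real
    and f :: "nat \<Rightarrow> real" and g :: "nat \<Rightarrow> int"
  assumes distinct_links:
      "\<forall>i j j'. adj n c r i j \<and> adj n c r i j' \<and> j \<noteq> j' \<longrightarrow> linkpt c i j \<noteq> linkpt c i j'"
    and sync: "sync_schedule n c r f g"
begin

abbreviation link :: "nat \<Rightarrow> nat \<Rightarrow> real \<Rightarrow> bool" where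
  "link i j t \<equiv> at_link n c r f g i j t"

lemma link_less: "link i j t \<Longrightarrow> i < n \<and> j < n"
  by (simp add: at_link_def adj_def)

lemma direction_cases: "i < n \<Longrightarrow> g i = 1 \<or> g i = -1"
  using sync by (simp add: sync_schedule_def)

lemma pos_add_int: "pos c f g i (t + of_int z) = pos c f g i t"
proof -
  have "f i + of_int (g i) * 2 * pi * (t + of_int z)
      = f i + of_int (g i) * 2 * pi * t + of_int (g i * z) * 2 * pi"
    by (simp add: algebra_simps)
  then show ?thesis unfolding pos_def by (metis cis_eq_iff_int)
qed

lemma pos_eq_imp_int_diff:
  assumes "i < n" "pos c f g i t1 = pos c f g i t2"
  shows "t1 - t2 \<in> \<int>"
proof -
  have "cis (f i + of_int (g i) * 2 * pi * t1) = cis (f i + of_int (g i) * 2 * pi * t2)"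
    using assms(2) by (simp add: pos_def)
  then obtain z :: int where
    "f i + of_int (g i) * 2 * pi * t1 = f i + of_int (g i) * 2 * pi * t2 + of_int z * 2 * pi"
    unfolding cis_eq_iff_int by blast
  then have "(of_int (g i) * (t1 - t2) - of_int z) * (2 * pi) = 0"
    by (simp add: algebra_simps)
  then have "of_int (g i) * (t1 - t2) = of_int z"
    by simp
  with direction_cases[OF assms(1)] have "t1 - t2 = of_int (g i * z)"
    by auto
  then show ?thesis by simp
qed

lemma pos_eq_start_iff: "i < n \<Longrightarrow> pos c f g i t = pos c f g i 0 \<longleftrightarrow> t \<in> \<int>"
  using pos_eq_imp_int_diff[of i t 0] pos_add_int[of i 0] by (auto elim: Ints_cases)

lemma pos_surj:
  assumes "i < n" "cmod (p - c i) = 1"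
  shows "\<exists>t\<ge>0. pos c f g i t = p"
proof -
  define t where "t = (Arg (p - c i) - f i) / (of_int (g i) * 2 * pi)"
  have "p - c i \<noteq> 0" using assms(2) by auto
  then have "cis (Arg (p - c i)) = p - c i"
    using cis_Arg assms(2) by (simp add: sgn_div_norm)
  moreover have "of_int (g i) * 2 * pi * t = Arg (p - c i) - f i"
    using direction_cases[OF assms(1)] by (auto simp: t_def)
  ultimately have "pos c f g i t = p" unfolding pos_def by simp
  then have "pos c f g i (t + of_int (- \<lfloor>t\<rfloor>)) = p" by (simp only: pos_add_int)
  moreover have "t + of_int (- \<lfloor>t\<rfloor>) \<ge> 0" by linarith
  ultimately show ?thesis by blast
qed

lemma link_add_int: "link i j (t + of_int z) \<longleftrightarrow> link i j t"
  by (simp add: at_link_def pos_add_int)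

lemma link_sym: "link i j t \<Longrightarrow> link j i t"
proof -
  assume ij: "link i j t"
  then have "adj n c r i j" by (simp add: at_link_def)
  with sync have "pos c f g i t = linkpt c i j \<longleftrightarrow> pos c f g j t = linkpt c j i"
    unfolding sync_schedule_def by blast
  moreover have "adj n c r j i"
    using \<open>adj n c r i j\<close> by (auto simp: adj_def norm_minus_commute)
  ultimately show ?thesis using ij by (simp add: at_link_def)
qed

lemma link_unique: "link i j t \<Longrightarrow> link i j' t \<Longrightarrow> j = j'"
  using distinct_links unfolding at_link_def by metis

definition link_swap :: "real \<Rightarrow> nat \<Rightarrow> nat" where
  "link_swap t i = (if \<exists>j. link i j t then (THE j. link i j t) else i)"

lemma link_swap_eqI:
  assumes "link i j t"
  shows "link_swap t i = j"
proof -
  have "(THE j. link i j t) = j"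
    by (rule the_equality) (use assms link_unique in blast)+
  with assms show ?thesis unfolding link_swap_def by auto
qed

lemma link_swap_no_link: "\<nexists>j. link i j t \<Longrightarrow> link_swap t i = i"
  unfolding link_swap_def by simp

lemma link_swap_link_swap [simp]: "link_swap t (link_swap t i) = i"
proof (cases "\<exists>j. link i j t")
  case True
  then obtain j where "link i j t" by blast
  then show ?thesis using link_swap_eqI link_sym by metis
qed (simp add: link_swap_no_link)

lemma link_swap_permutes: "link_swap t permutes {..<n}"
proof (rule inj_imp_permutes)
  show "inj_on (link_swap t) {..<n}"
    by (metis inj_onI link_swap_link_swap)
  show "link_swap t i \<in> {..<n}" if "i \<in> {..<n}" for i
    using that link_less link_swap_eqI link_swap_no_link by (cases "\<exists>j. link i j t") auto
  show "link_swap t i = i" if "i \<notin> {..<n}" for i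
    using that link_less link_swap_no_link by (meson lessThan_iff)
qed simp

lemma link_swap_add_int: "link_swap (t + of_int z) = link_swap t"
  by (rule ext) (simp add: link_swap_def link_add_int)

definition link_times :: "real set" where
  "link_times = {t. \<exists>i j. link i j t}"

lemma link_swap_not_link_time: "t \<notin> link_times \<Longrightarrow> link_swap t = id"
  unfolding link_times_def by (auto simp: link_swap_no_link)

lemma link_times_add_int: "t + of_int z \<in> link_times \<longleftrightarrow> t \<in> link_times"
  unfolding link_times_def by (simp add: link_add_int)

lemma finite_link_times_pair: "finite {t. link i j t \<and> a \<le> t \<and> t \<le> b}"
proof (cases "\<exists>t0. link i j t0")
  case True
  then obtain t0 where t0: "link i j t0" by blast
  have "{t. link i j t \<and> a \<le> t \<and> t \<le> b} \<subseteq> (\<lambda>z. t0 + of_int z) ` {\<lfloor>a - t0\<rfloor>..\<lceil>b - t0\<rceil>}"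
  proof
    fix t assume "t \<in> {t. link i j t \<and> a \<le> t \<and> t \<le> b}"
    then have t: "link i j t" "a \<le> t" "t \<le> b" by auto
    then have "pos c f g i t = pos c f g i t0" using t0 by (simp add: at_link_def)
    then have "t - t0 \<in> \<int>" using pos_eq_imp_int_diff link_less[OF t0] by blast
    then obtain z where "t - t0 = of_int z" by (auto elim: Ints_cases)
    then have z: "t = t0 + of_int z" by simp
    have "\<lfloor>a - t0\<rfloor> \<le> z" using z t(2) by linarith
    moreover have "z \<le> \<lceil>b - t0\<rceil>" using z t(3) by linarith
    ultimately show "t \<in> (\<lambda>z. t0 + of_int z) ` {\<lfloor>a - t0\<rfloor>..\<lceil>b - t0\<rceil>}" using z by auto
  qed
  then show ?thesis by (rule finite_subset) simp
qed simp

lemma finite_link_times: "finite (link_times \<inter> {a..b})"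
proof (rule finite_subset)
  show "link_times \<inter> {a..b} \<subseteq> (\<Union>i<n. \<Union>j<n. {t. link i j t \<and> a \<le> t \<and> t \<le> b})"
    unfolding link_times_def using link_less by fastforce
qed (simp add: finite_link_times_pair)

lemma link_times_isolated: "\<exists>d>0. \<forall>u. u \<noteq> t \<and> \<bar>u - t\<bar> < d \<longrightarrow> u \<notin> link_times"
proof -
  from finite_set_avoid[OF finite_link_times[of "t - 1" "t + 1"], of t]
  obtain d where d: "d > 0" "\<forall>x\<in>link_times \<inter> {t - 1..t + 1}. x \<noteq> t \<longrightarrow> d \<le> dist t x"
    by (elim exE conjE)
  show ?thesis
  proof (intro exI[of _ "min d 1"] conjI allI impI)
    fix u assume u: "u \<noteq> t \<and> \<bar>u - t\<bar> < min d 1"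
    show "u \<notin> link_times"
    proof
      assume "u \<in> link_times"
      moreover have "u \<in> {t - 1..t + 1}" using u by auto
      ultimately have "d \<le> dist t u" using u d(2) by blast
      with u show False by (simp add: dist_real_def abs_minus_commute)
    qed
  qed (use d in simp)
qed

lemma finite_link_times_Ioc: "finite (link_times \<inter> {s<..t})"
  and finite_link_times_Ioo: "finite (link_times \<inter> {s<..<t})"
  by (rule finite_subset[OF _ finite_link_times[of s t]]; auto)+

definition events :: "real \<Rightarrow> real \<Rightarrow> real list" where
  "events s t = sorted_list_of_set (link_times \<inter> {s<..t})"

definition events_before :: "real \<Rightarrow> real \<Rightarrow> real list" where
  "events_before s t = sorted_list_of_set (link_times \<inter> {s<..<t})"

lemma events_refl [simp]: "events s s = []"
  by (simp add: events_def)

lemma events_append: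
  assumes "s \<le> t" "t \<le> u"
  shows "events s u = events s t @ events t u"
proof -
  from assms have "link_times \<inter> {s<..u} = (link_times \<inter> {s<..t}) \<union> (link_times \<inter> {t<..u})"
    by auto
  then show ?thesis
    unfolding events_def by (simp add: sorted_list_of_set_Un_less finite_link_times_Ioc)
qed

lemma events_snoc:
  assumes "s < t"
  shows "events s t = events_before s t @ (if t \<in> link_times then [t] else [])"
proof (cases "t \<in> link_times")
  case True
  with assms have "link_times \<inter> {s<..t} = (link_times \<inter> {s<..<t}) \<union> {t}" by auto
  moreover have "sorted_list_of_set ((link_times \<inter> {s<..<t}) \<union> {t})
      = sorted_list_of_set (link_times \<inter> {s<..<t}) @ sorted_list_of_set {t}"
    by (rule sorted_list_of_set_Un_less) (auto simp: finite_link_times_Ioo)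
  ultimately show ?thesis
    using True unfolding events_def events_before_def by simp
next
  case False
  then have "link_times \<inter> {s<..t} = link_times \<inter> {s<..<t}" by (auto simp: le_less)
  with False show ?thesis unfolding events_def events_before_def by simp
qed

lemma events_add_int:
  "events (s + of_int z) (t + of_int z) = map (\<lambda>x. x + of_int z) (events s t)"
proof -
  have "link_times \<inter> {s + of_int z<..t + of_int z} = (\<lambda>x. x + of_int z) ` (link_times \<inter> {s<..t})"
  proof (intro equalityI subsetI)
    fix x assume x: "x \<in> link_times \<inter> {s + of_int z<..t + of_int z}"
    then have "x - of_int z \<in> link_times"
      using link_times_add_int[of "x - of_int z" z] by simp
    with x show "x \<in> (\<lambda>x. x + of_int z) ` (link_times \<inter> {s<..t})"
      by (intro image_eqI[of _ _ "x - of_int z"]) auto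
  qed (auto simp: link_times_add_int)
  then show ?thesis
    unfolding events_def by (simp add: sorted_list_of_set_image_add finite_link_times_Ioc)
qed

lemma events_eventually_right:
  assumes "s \<le> t"
  shows "\<forall>\<^sub>F u in at_right t. events s u = events s t"
proof -
  obtain d where d: "d > 0" "\<forall>u. u \<noteq> t \<and> \<bar>u - t\<bar> < d \<longrightarrow> u \<notin> link_times"
    using link_times_isolated by blast
  have "events s u = events s t" if "t < u" "u < t + d" for u
  proof -
    have "link_times \<inter> {s<..u} = link_times \<inter> {s<..t}"
      using that d(2) by (force simp: abs_if)
    then show ?thesis by (simp add: events_def)
  qed
  then show ?thesis
    unfolding eventually_at_right_field using d(1) by (intro exI[of _ "t + d"]) auto
qed

lemma events_eventually_left:
  assumes "s < t"
  shows "\<forall>\<^sub>F u in at_left t. events s u = events_before s t"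
proof -
  obtain d where d: "d > 0" "\<forall>u. u \<noteq> t \<and> \<bar>u - t\<bar> < d \<longrightarrow> u \<notin> link_times"
    using link_times_isolated by blast
  have "events s u = events_before s t" if "max s (t - d) < u" "u < t" for u
  proof -
    have "link_times \<inter> {s<..u} = link_times \<inter> {s<..<t}"
      using that d(2) by (force simp: abs_if)
    then show ?thesis by (simp add: events_def events_before_def)
  qed
  then show ?thesis
    unfolding eventually_at_left_field using d(1) assms by (intro exI[of _ "max s (t - d)"]) auto
qed

lemma pwc_events: "pwc s (\<lambda>t. F (events s t))"
proof (rule pwcI)
  fix t assume "s \<le> t"
  from events_eventually_right[OF this] show "\<forall>\<^sub>F u in at_right t. F (events s u) = F (events s t)"
    by eventually_elim simp
next
  fix t assume "s < t"
  from events_eventually_left[OF this] have "\<forall>\<^sub>F u in at_left t. F (events s u) = F (events_before s t)"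
    by eventually_elim simp
  then show "\<exists>v. \<forall>\<^sub>F u in at_left t. F (events s u) = v" by blast
qed

lemma leftval_events:
  assumes "s < t"
  shows "leftval (\<lambda>t. F (events s t)) t = F (events_before s t)"
proof (rule leftval_eqI)
  from events_eventually_left[OF assms]
  show "\<forall>\<^sub>F u in at_left t. F (events s u) = F (events_before s t)"
    by eventually_elim simp
qed

definition swaps :: "real list \<Rightarrow> nat \<Rightarrow> nat" where
  "swaps es = foldl (\<lambda>p e. link_swap e \<circ> p) id es"

lemma swaps_Nil [simp]: "swaps [] = id"
  by (simp add: swaps_def)

lemma swaps_snoc [simp]: "swaps (es @ [e]) = link_swap e \<circ> swaps es"
  by (simp add: swaps_def)

lemma swaps_append: "swaps (xs @ ys) = swaps ys \<circ> swaps xs"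
proof (induction ys rule: rev_induct)
  case (snoc y ys)
  have "swaps (xs @ ys @ [y]) = link_swap y \<circ> swaps (xs @ ys)"
    using swaps_snoc[of "xs @ ys" y] by simp
  with snoc show ?case by (simp add: comp_assoc)
qed simp

lemma swaps_permutes: "swaps es permutes {..<n}"
proof (induction es rule: rev_induct)
  case (snoc e es)
  then show ?case
    unfolding swaps_snoc by (rule permutes_compose[OF _ link_swap_permutes])
qed (simp only: swaps_Nil permutes_id)

lemma swaps_add_int: "swaps (map (\<lambda>x. x + of_int z) es) = swaps es"
  by (induction es rule: rev_induct) (simp_all add: link_swap_add_int)

definition transport :: "real \<Rightarrow> real \<Rightarrow> nat \<Rightarrow> nat" where
  "transport s t = swaps (events s t)"

lemma transport_refl [simp]: "transport s s = id"
  by (simp add: transport_def)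

lemma transport_trans:
  assumes "s \<le> t" "t \<le> u"
  shows "transport s u = transport t u \<circ> transport s t"
  unfolding transport_def events_append[OF assms] by (rule swaps_append)

lemma transport_step:
  assumes "s < t"
  shows "transport s t = link_swap t \<circ> swaps (events_before s t)"
  using link_swap_not_link_time[of t]
  by (cases "t \<in> link_times") (simp_all add: transport_def events_snoc[OF assms])

lemma transport_add_int: "transport (s + of_int z) (t + of_int z) = transport s t"
  by (simp add: transport_def events_add_int swaps_add_int)

lemma transport_permutes: "transport s t permutes {..<n}"
  by (simp add: transport_def swaps_permutes)

lemma ring_trace_step:
  assumes "ring_trace n c r f g i s tok" "s < t"
  shows "tok t = link_swap t (leftval tok t)"
proof -
  have rule: "(\<forall>j. link (leftval tok t) j t \<longrightarrow> tok t = j) \<and>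
      ((\<forall>j. \<not> link (leftval tok t) j t) \<longrightarrow> tok t = leftval tok t)"
    using assms unfolding ring_trace_def by blast
  show ?thesis
  proof (cases "\<exists>j. link (leftval tok t) j t")
    case True
    then obtain j where "link (leftval tok t) j t" by blast
    with rule show ?thesis by (simp add: link_swap_eqI)
  qed (use rule in \<open>simp add: link_swap_no_link\<close>)
qed

lemma ring_trace_eq_transport:
  assumes rt: "ring_trace n c r f g i s tok" and "s \<le> t"
  shows "tok t = transport s t i"
proof (rule real_induct[where Q = "\<lambda>t. tok t = transport s t i", OF _ _ _ \<open>s \<le> t\<close>])
  show "tok s = transport s s i" using rt unfolding ring_trace_def by simp
next
  fix t assume t: "s < t" and ev: "\<forall>\<^sub>F u in at_left t. tok u = transport s u i"
  have "pwc s tok" using rt unfolding ring_trace_def by blast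
  from ev pwc_eventually_left[OF this t] events_eventually_left[OF t]
  have "\<forall>\<^sub>F u in at_left t.
      tok u = transport s u i \<and> tok u = leftval tok t \<and> events s u = events_before s t"
    by (intro eventually_conj)
  then obtain u where "tok u = transport s u i" "tok u = leftval tok t" "events s u = events_before s t"
    using eventually_happens'[OF trivial_limit_at_left_real] by blast
  then have "leftval tok t = swaps (events_before s t) i" by (simp add: transport_def)
  then show "tok t = transport s t i"
    using ring_trace_step[OF rt t] transport_step[OF t] by simp
next
  fix t assume t: "s \<le> t" and tok_t: "tok t = transport s t i"
  have "pwc s tok" using rt unfolding ring_trace_def by blast
  from pwc_eventually_right[OF this t] events_eventually_right[OF t]
  show "\<forall>\<^sub>F u in at_right t. tok u = transport s u i"
    by eventually_elim (simp add: tok_t transport_def)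
qed

lemma ring_trace_transport: "ring_trace n c r f g i s (\<lambda>t. transport s t i)"
  unfolding ring_trace_def
proof (intro conjI allI impI)
  show "transport s s i = i" by simp
  show "pwc s (\<lambda>t. transport s t i)"
    using pwc_events[of s "\<lambda>es. swaps es i"] by (simp add: transport_def)
next
  fix t j assume t: "s < t"
  have "leftval (\<lambda>t. transport s t i) t = swaps (events_before s t) i"
    using leftval_events[OF t, of "\<lambda>es. swaps es i"] by (simp add: transport_def)
  then have step: "transport s t i = link_swap t (leftval (\<lambda>t. transport s t i) t)"
    using transport_step[OF t] by simp
  {
    assume "link (leftval (\<lambda>t. transport s t i) t) j t"
    with step show "transport s t i = j" by (simp add: link_swap_eqI)
  }
  {
    assume "\<forall>j. \<not> link (leftval (\<lambda>t. transport s t i) t) j t"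
    with step show "transport s t i = leftval (\<lambda>t. transport s t i) t"
      by (simp add: link_swap_no_link)
  }
qed

subsection \<open>Rings and the period permutation\<close>

definition period_perm :: "nat \<Rightarrow> nat" where
  "period_perm = transport 0 1"

lemma period_perm_permutes: "period_perm permutes {..<n}"
  by (simp add: period_perm_def transport_permutes)

lemma permutation_period_perm: "permutation period_perm"
  using period_perm_permutes by (auto simp: permutation_permutes)

lemma transport_int_add_nat: "transport (of_int z) (of_int z + of_nat N) = period_perm ^^ N"
proof (induction N)
  case (Suc N)
  have "transport (of_int z) (of_int z + of_nat (Suc N))
      = transport (of_int z + of_nat N) (of_int z + of_nat (Suc N)) \<circ> transport (of_int z) (of_int z + of_nat N)"
    by (rule transport_trans) auto
  also have "transport (of_int z + of_nat N) (of_int z + of_nat (Suc N)) = period_perm"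
    using transport_add_int[of 0 "z + int N" 1] by (simp add: period_perm_def add_ac)
  finally show ?case using Suc by simp
qed simp

lemma orbit_period_perm_subset: "j < n \<Longrightarrow> orbit period_perm j \<subseteq> {..<n}"
  using permutes_orbit_subset[OF period_perm_permutes] by simp

lemma card_orbit_period_perm_pos: "j < n \<Longrightarrow> 0 < card (orbit period_perm j)"
  using finite_subset[OF orbit_period_perm_subset] orbit_nonempty by (simp add: card_gt_0_iff)

lemma robots_in_ring_eq_orbit:
  assumes rt: "ring_trace n c r f g i s tok" and "i < n"
  shows "robots_in_ring n c f g (ring_points c f g s tok) = orbit period_perm (transport s \<lceil>s\<rceil> i)"
proof -
  define j where "j = transport s \<lceil>s\<rceil> i"
  have "j < n"
    using permutes_in_image[OF transport_permutes] \<open>i < n\<close> by (simp add: j_def)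
  have tok_int: "tok (of_int \<lceil>s\<rceil> + of_nat N) = (period_perm ^^ N) j" for N
  proof -
    have "tok (of_int \<lceil>s\<rceil> + of_nat N) = transport s (of_int \<lceil>s\<rceil> + of_nat N) i"
      by (rule ring_trace_eq_transport[OF rt]) linarith
    also have "\<dots> = transport (of_int \<lceil>s\<rceil>) (of_int \<lceil>s\<rceil> + of_nat N) j"
      unfolding j_def by (subst transport_trans[of _ "of_int \<lceil>s\<rceil>"]) auto
    finally show ?thesis by (simp add: transport_int_add_nat)
  qed
  have "m \<in> robots_in_ring n c f g (ring_points c f g s tok) \<longleftrightarrow> (\<exists>N. m = (period_perm ^^ N) j)" for m
  proof
    assume "m \<in> robots_in_ring n c f g (ring_points c f g s tok)"
    then obtain t where t: "m < n" "s \<le> t" "m = tok t" "pos c f g m 0 = pos c f g m t"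
      unfolding robots_in_ring_def ring_points_def by auto
    then have "t \<in> \<int>" using pos_eq_start_iff by metis
    then obtain w where "t = of_int w" by (auto elim: Ints_cases)
    with t(2) have "t = of_int \<lceil>s\<rceil> + of_nat (nat (w - \<lceil>s\<rceil>))" by (simp add: ceiling_le_iff)
    with t(3) tok_int show "\<exists>N. m = (period_perm ^^ N) j" by metis
  next
    assume "\<exists>N. m = (period_perm ^^ N) j"
    then obtain N where m: "m = (period_perm ^^ N) j" by blast
    define t where "t = of_int \<lceil>s\<rceil> + (of_nat N :: real)"
    have "m < n" using permutes_in_funpow_image[OF period_perm_permutes] \<open>j < n\<close> m by simp
    moreover have "s \<le> t" unfolding t_def by linarith
    moreover have "tok t = m" using tok_int m by (simp add: t_def)
    moreover have "pos c f g m t = pos c f g m 0"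
      using pos_eq_start_iff[OF \<open>m < n\<close>] by (simp add: t_def)
    ultimately show "m \<in> robots_in_ring n c f g (ring_points c f g s tok)"
      unfolding robots_in_ring_def ring_points_def by force
  qed
  then show ?thesis
    by (auto simp: orbit_altdef_permutation[OF permutation_period_perm] j_def)
qed

lemma robots_in_rings: "robots_in_ring n c f g ` rings n c r f g = orbit period_perm ` {..<n}"
proof (intro equalityI subsetI)
  fix X assume "X \<in> robots_in_ring n c f g ` rings n c r f g"
  then obtain i s tok where "i < n" "ring_trace n c r f g i s tok"
    and X: "X = robots_in_ring n c f g (ring_points c f g s tok)"
    unfolding rings_def by blast
  moreover have "transport s \<lceil>s\<rceil> i < n"
    using permutes_in_image[OF transport_permutes] \<open>i < n\<close> by simp
  ultimately show "X \<in> orbit period_perm ` {..<n}"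
    using robots_in_ring_eq_orbit by blast
next
  fix X assume "X \<in> orbit period_perm ` {..<n}"
  then obtain j where "j < n" and X: "X = orbit period_perm j" by blast
  then have "ring_points c f g 0 (\<lambda>t. transport 0 t j) \<in> rings n c r f g"
    unfolding rings_def using ring_trace_transport by blast
  moreover have "robots_in_ring n c f g (ring_points c f g 0 (\<lambda>t. transport 0 t j)) = X"
    using robots_in_ring_eq_orbit[OF ring_trace_transport \<open>j < n\<close>] X by simp
  ultimately show "X \<in> robots_in_ring n c f g ` rings n c r f g" by blast
qed

lemma min_ring_robots_iff:
  "min_ring_robots n c r f g k \<longleftrightarrow>
     (\<exists>j<n. card (orbit period_perm j) = k) \<and> (\<forall>j<n. k \<le> card (orbit period_perm j))"
proof -
  have ex: "(\<exists>R\<in>rings n c r f g. P (robots_in_ring n c f g R)) \<longleftrightarrow> (\<exists>j<n. P (orbit period_perm j))"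
    and all: "(\<forall>R\<in>rings n c r f g. P (robots_in_ring n c f g R)) \<longleftrightarrow> (\<forall>j<n. P (orbit period_perm j))"
    for P :: "nat set \<Rightarrow> bool"
    using robots_in_rings by (metis (no_types, lifting) image_iff lessThan_iff)+
  show ?thesis
    unfolding min_ring_robots_def ex[of "\<lambda>X. card X = k"] all[of "\<lambda>X. k \<le> card X"] ..
qed

definition occupied :: "(nat \<Rightarrow> real \<Rightarrow> nat option) \<Rightarrow> real \<Rightarrow> nat set" where
  "occupied loc t = {i. \<exists>m<n. loc m t = Some i}"

lemma switching_rule_iff:
  "(\<forall>j. link i j t \<and> \<not> P j \<longrightarrow> x = Some j) \<and> ((\<forall>j. \<not> (link i j t \<and> \<not> P j)) \<longrightarrow> x = Some i)
   \<longleftrightarrow> x = Some (switch (link_swap t) {j. P j} i)"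
proof (cases "\<exists>j. link i j t")
  case True
  then obtain j where j: "link i j t" by blast
  then have "link i j' t \<longleftrightarrow> j' = j" for j' using link_unique by blast
  then show ?thesis using link_swap_eqI[OF j] by (auto simp: switch_def)
qed (auto simp: switch_def link_swap_no_link)

context
  fixes L :: "nat set" and tau :: "nat \<Rightarrow> real" and loc :: "nat \<Rightarrow> real \<Rightarrow> nat option"
  assumes run: "scs_run n c r f g L tau loc"
begin

lemma run_pwc: "m < n \<Longrightarrow> pwc 0 (loc m)"
  using run unfolding scs_run_def by blast

lemma run_None_iff: "m < n \<Longrightarrow> 0 \<le> t \<Longrightarrow> loc m t = None \<longleftrightarrow> m \<in> L \<and> tau m \<le> t"
  using run unfolding scs_run_def by blast

lemma run_start: "m < n \<Longrightarrow> loc m 0 = (if m \<in> L \<and> tau m \<le> 0 then None else Some m)"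
  using run unfolding scs_run_def by auto

lemma run_step:
  assumes "m < n" "0 < t" "loc m t \<noteq> None" "leftval (loc m) t = Some i"
  shows "loc m t = Some (switch (link_swap t) {j. occupied_before n loc j t} i)"
  using run assms unfolding scs_run_def switching_rule_iff[symmetric] by blast

lemma run_eventually_left:
  "0 < t \<Longrightarrow> \<forall>\<^sub>F u in at_left t. \<forall>m\<in>{..<n}. loc m u = leftval (loc m) t"
  by (rule eventually_ball_finite) (use pwc_eventually_left[OF run_pwc] in auto)

lemma run_eventually_right: "0 \<le> t \<Longrightarrow> \<forall>\<^sub>F u in at_right t. \<forall>m\<in>{..<n}. loc m u = loc m t"
  by (rule eventually_ball_finite) (use pwc_eventually_right[OF run_pwc] in auto)

lemma run_left_step:
  assumes "m < n" "0 < t" "loc m t \<noteq> None"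
  obtains i where "leftval (loc m) t = Some i"
    and "loc m t = Some (switch (link_swap t) {j. occupied_before n loc j t} i)"
proof -
  have "\<forall>\<^sub>F u in at_left t. loc m u = leftval (loc m) t \<and> u \<in> {0<..<t}"
    using pwc_eventually_left[OF run_pwc[OF assms(1)] assms(2)] eventually_at_left_real[OF assms(2)]
    by (rule eventually_conj)
  then obtain u where u: "loc m u = leftval (loc m) t" "0 < u" "u < t"
    using eventually_happens'[OF trivial_limit_at_left_real] by auto
  have "loc m u \<noteq> None"
    using run_None_iff[OF assms(1), of u] run_None_iff[OF assms(1), of t] assms(3) u(2,3) by auto
  with u(1) obtain i where "leftval (loc m) t = Some i" by auto
  with run_step[OF assms] that show ?thesis by blast
qed

lemma occupied_step:
  assumes "0 < t" and stay: "\<And>m. m < n \<Longrightarrow> loc m t = None \<longleftrightarrow> leftval (loc m) t = None"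
  shows "occupied loc t = link_swap t ` {j. occupied_before n loc j t}"
proof -
  define Occ where "Occ = {j. occupied_before n loc j t}"
  have "occupied loc t = switch (link_swap t) Occ ` Occ"
  proof (intro equalityI subsetI)
    fix x assume "x \<in> occupied loc t"
    then obtain m where "m < n" "loc m t = Some x" unfolding occupied_def by blast
    with run_left_step[OF \<open>m < n\<close> assms(1)] obtain i
      where "leftval (loc m) t = Some i" "x = switch (link_swap t) Occ i"
      unfolding Occ_def by (metis option.distinct(1) option.inject)
    then show "x \<in> switch (link_swap t) Occ ` Occ"
      unfolding Occ_def occupied_before_def using \<open>m < n\<close> by blast
  next
    fix x assume "x \<in> switch (link_swap t) Occ ` Occ"
    then obtain i m where "x = switch (link_swap t) Occ i" "m < n" "leftval (loc m) t = Some i"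
      unfolding Occ_def occupied_before_def by blast
    moreover from this stay have "loc m t \<noteq> None" by simp
    ultimately show "x \<in> occupied loc t"
      using run_left_step[OF \<open>m < n\<close> assms(1)] unfolding occupied_def Occ_def by fastforce
  qed
  then show ?thesis unfolding Occ_def by (simp add: switch_image)
qed

definition valid_config :: "real \<Rightarrow> bool" where
  "valid_config t \<longleftrightarrow> occupied loc t \<subseteq> {..<n} \<and>
     (\<forall>m<n. \<forall>m'<n. loc m t = loc m' t \<longrightarrow> loc m t \<noteq> None \<longrightarrow> m = m')"

lemma valid_config_left:
  assumes "0 < t" and "\<forall>\<^sub>F u in at_left t. valid_config u"
  shows "valid_config t"
proof -
  have "\<forall>\<^sub>F u in at_left t. valid_config u \<and> (\<forall>m\<in>{..<n}. loc m u = leftval (loc m) t)"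
    using assms(2) run_eventually_left[OF assms(1)] by (rule eventually_conj)
  then have "\<exists>u. valid_config u \<and> (\<forall>m\<in>{..<n}. loc m u = leftval (loc m) t)"
    by (rule eventually_happens'[OF trivial_limit_at_left_real])
  then obtain u where u: "valid_config u" "\<And>m. m < n \<Longrightarrow> loc m u = leftval (loc m) t"
    by auto
  define Occ where "Occ = {j. occupied_before n loc j t}"
  have Occ: "Occ = occupied loc u"
    unfolding Occ_def occupied_before_def occupied_def using u(2) by auto
  have alive: "\<exists>i. loc m u = Some i \<and> loc m t = Some (switch (link_swap t) Occ i)"
    if "m < n" "loc m t \<noteq> None" for m
    using run_left_step[OF that(1) assms(1) that(2)] u(2)[OF that(1)] unfolding Occ_def by metis
  show ?thesis
    unfolding valid_config_def
  proof (intro conjI allI impI subsetI)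
    fix x assume "x \<in> occupied loc t"
    then obtain m where m: "m < n" "loc m t = Some x" unfolding occupied_def by blast
    with alive obtain i where i: "loc m u = Some i" "x = switch (link_swap t) Occ i" by fastforce
    then have "i < n" using u(1) m(1) unfolding valid_config_def occupied_def by blast
    then show "x \<in> {..<n}"
      using i(2) permutes_in_image[OF link_swap_permutes] by (simp add: switch_def)
  next
    fix m m' assume m: "m < n" "m' < n" "loc m t = loc m' t" "loc m t \<noteq> None"
    obtain i where i: "loc m u = Some i" "loc m t = Some (switch (link_swap t) Occ i)"
      using alive[OF m(1,4)] by blast
    have "loc m' t \<noteq> None" using m(3,4) by simp
    then obtain i' where i': "loc m' u = Some i'" "loc m' t = Some (switch (link_swap t) Occ i')"
      using alive[OF m(2)] by blast
    have "i \<in> Occ" "i' \<in> Occ" using i(1) i'(1) m(1,2) unfolding Occ occupied_def by blast+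
    with i(2) i'(2) m(3) have "i = i'"
      using inj_on_switch[of "link_swap t" Occ] by (simp add: inj_on_def)
    with i(1) i'(1) u(1) m(1,2) show "m = m'" unfolding valid_config_def by auto
  qed
qed

lemma valid_config:
  assumes "0 \<le> t"
  shows "valid_config t"
proof (rule real_induct[where Q = valid_config, OF _ valid_config_left _ assms])
  show "valid_config 0"
    unfolding valid_config_def occupied_def using run_start by (auto split: if_splits)
next
  fix t :: real assume "0 \<le> t" and valid: "valid_config t"
  from run_eventually_right[OF \<open>0 \<le> t\<close>] show "\<forall>\<^sub>F u in at_right t. valid_config u"
  proof eventually_elim
    case (elim u)
    then have "occupied loc u = occupied loc t" unfolding occupied_def by auto
    with elim valid show ?case unfolding valid_config_def by auto
  qed
qed

lemma occupied_subset: "0 \<le> t \<Longrightarrow> occupied loc t \<subseteq> {..<n}"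
  using valid_config unfolding valid_config_def by blast

lemma occupied_after_departures_left:
  assumes "0 \<le> T" "\<forall>m\<in>L. tau m \<le> T" "T < t"
    and ev: "\<forall>\<^sub>F u in at_left t. occupied loc u = transport T u ` S"
  shows "occupied loc t = transport T t ` S"
proof -
  have gone: "loc m u = None \<longleftrightarrow> m \<in> L" if "m < n" "T \<le> u" for m u
    using run_None_iff[OF that(1), of u] that assms(1,2) by auto
  have "0 < t" using assms(1,3) by simp
  have "\<forall>\<^sub>F u in at_left t. (occupied loc u = transport T u ` S \<and> events T u = events_before T t) \<and>
      (\<forall>m\<in>{..<n}. loc m u = leftval (loc m) t) \<and> u \<in> {T<..<t}"
    using ev events_eventually_left[OF assms(3)] run_eventually_left[OF \<open>0 < t\<close>]
      eventually_at_left_real[OF assms(3)]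
    by (intro eventually_conj)
  then have "\<exists>u. (occupied loc u = transport T u ` S \<and> events T u = events_before T t) \<and>
      (\<forall>m\<in>{..<n}. loc m u = leftval (loc m) t) \<and> u \<in> {T<..<t}"
    by (rule eventually_happens'[OF trivial_limit_at_left_real])
  then obtain u where u: "occupied loc u = transport T u ` S" "events T u = events_before T t"
    "\<And>m. m < n \<Longrightarrow> loc m u = leftval (loc m) t" "T < u" "u < t"
    by auto
  have "{j. occupied_before n loc j t} = occupied loc u"
    unfolding occupied_before_def occupied_def using u(3) by auto
  moreover have "loc m t = None \<longleftrightarrow> leftval (loc m) t = None" if "m < n" for m
    using gone[OF that, of t] gone[OF that, of u] u(3)[OF that] u(4) assms(3) by simp
  ultimately have "occupied loc t = link_swap t ` occupied loc u"
    using occupied_step[OF \<open>0 < t\<close>] by simp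
  also have "\<dots> = transport T t ` S"
    using u(1,2) transport_step[OF assms(3)] by (simp add: image_comp transport_def)
  finally show ?thesis .
qed

lemma occupied_after_departures:
  assumes "0 \<le> T" "\<forall>m\<in>L. tau m \<le> T" "T \<le> t"
  shows "occupied loc t = transport T t ` occupied loc T"
proof (rule real_induct[where Q = "\<lambda>t. occupied loc t = transport T t ` occupied loc T",
      OF _ occupied_after_departures_left[OF assms(1,2)] _ assms(3)])
  show "occupied loc T = transport T T ` occupied loc T" by simp
next
  fix t assume t: "T \<le> t" and occ_t: "occupied loc t = transport T t ` occupied loc T"
  have "0 \<le> t" using t assms(1) by simp
  from run_eventually_right[OF this] events_eventually_right[OF t]
  show "\<forall>\<^sub>F u in at_right t. occupied loc u = transport T u ` occupied loc T"
  proof eventually_elim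
    case (elim u)
    then have "occupied loc u = occupied loc t" unfolding occupied_def by auto
    with elim occ_t show ?case by (simp add: transport_def)
  qed
qed

lemma card_occupied_after_departures:
  assumes "L \<subseteq> {..<n}" "0 \<le> T" "\<forall>m\<in>L. tau m \<le> T"
  shows "card (occupied loc T) = n - card L"
proof -
  have alive: "loc m T \<noteq> None \<longleftrightarrow> m \<notin> L" if "m < n" for m
    using run_None_iff[OF that, of T] assms(2,3) by auto
  have "occupied loc T = (\<lambda>m. the (loc m T)) ` ({..<n} - L)"
    unfolding occupied_def using alive by force
  moreover have "inj_on (\<lambda>m. the (loc m T)) ({..<n} - L)"
  proof (rule inj_onI)
    fix m m' assume mm: "m \<in> {..<n} - L" "m' \<in> {..<n} - L" "the (loc m T) = the (loc m' T)"
    then have "m < n" "m' < n" "loc m T \<noteq> None" "loc m' T \<noteq> None"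
      using alive by auto
    with mm(3) have "loc m T = loc m' T" by auto
    with valid_config[OF assms(2)] \<open>m < n\<close> \<open>m' < n\<close> \<open>loc m T \<noteq> None\<close>
    show "m = m'" unfolding valid_config_def by blast
  qed
  ultimately show ?thesis
    using card_image card_Diff_subset[OF finite_subset[OF assms(1)] assms(1)] by force
qed

end

subsection \<open>Resilience\<close>

lemma covered_if_orbits_meet:
  assumes occ: "\<And>t. T \<le> t \<Longrightarrow> occupied loc t = transport 0 t ` S"
    and meet: "\<And>j. j < n \<Longrightarrow> orbit period_perm j \<inter> S \<noteq> {}"
  shows "covered n c f g loc"
  unfolding covered_def
proof (intro allI impI)
  fix i p T' assume "i < n" "cmod (p - c i) = 1"
  then obtain tp where tp: "0 \<le> tp" "pos c f g i tp = p" using pos_surj by blast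
  define j where "j = inv (transport 0 tp) i"
  have "j < n"
    using permutes_in_image[OF permutes_inv[OF transport_permutes]] \<open>i < n\<close> by (simp add: j_def)
  have "transport 0 tp j = i"
    using permutes_inverses(1)[OF transport_permutes] by (simp add: j_def)
  obtain a where a: "a \<in> orbit period_perm j" "a \<in> S" using meet[OF \<open>j < n\<close>] by blast
  have "j \<in> orbit period_perm a"
    using orbit_swap[OF permutation_self_in_orbit[OF permutation_period_perm] a(1)] .
  then obtain N where N: "nat \<lceil>\<bar>T'\<bar> + \<bar>T\<bar>\<rceil> \<le> N" "(period_perm ^^ N) a = j"
    using permutation_orbit_funpow_ge[OF permutation_period_perm] by blast
  define t where "t = tp + of_nat N"
  have "T' \<le> t" "T \<le> t" using N(1) tp(1) unfolding t_def by linarith+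
  have "transport 0 t a = transport (of_nat N) t ((period_perm ^^ N) a)"
    using transport_trans[of 0 "of_nat N" t] transport_int_add_nat[of 0 N] tp(1) by (simp add: t_def)
  also have "transport (of_nat N) t = transport 0 tp"
    using transport_add_int[of 0 "int N" tp] by (simp add: t_def add.commute)
  finally have "i \<in> occupied loc t"
    using occ[OF \<open>T \<le> t\<close>] a(2) N(2) \<open>transport 0 tp j = i\<close> by force
  moreover have "pos c f g i t = p"
    using pos_add_int[of i tp "int N"] tp(2) by (simp add: t_def)
  ultimately show "\<exists>t\<ge>T'. \<exists>m<n. loc m t = Some i \<and> pos c f g i t = p"
    using \<open>T' \<le> t\<close> unfolding occupied_def by blast
qed

lemma resilient_below_orbit_size:
  assumes size: "\<And>j. j < n \<Longrightarrow> K \<le> card (orbit period_perm j)" and "1 \<le> K"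
  shows "resilient n c r f g (K - 1)"
  unfolding resilient_def
proof (intro allI impI, elim conjE)
  fix L tau loc
  assume L: "L \<subseteq> {..<n}" "card L \<le> K - 1" and "\<forall>m. 0 \<le> tau m"
    and run: "scs_run n c r f g L tau loc"
  define T where "T = Max (insert 0 (tau ` L))"
  have "finite L" using L(1) finite_subset by blast
  then have T: "0 \<le> T" "\<forall>m\<in>L. tau m \<le> T" by (auto simp: T_def)
  define S where "S = inv (transport 0 T) ` occupied loc T"
  have occ: "occupied loc t = transport 0 t ` S" if "T \<le> t" for t
  proof -
    have "occupied loc t = transport T t ` occupied loc T"
      by (rule occupied_after_departures[OF run T that])
    also have "occupied loc T = transport 0 T ` S"
      unfolding S_def image_comp
      by (simp add: permutes_inverses(1)[OF transport_permutes] comp_def)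
    finally show ?thesis using transport_trans[OF T(1) that] by (simp add: image_comp)
  qed
  have "card S = n - card L"
    using card_occupied_after_departures[OF run L(1) T]
      card_image[OF inj_on_subset[OF bij_is_inj[OF permutes_bij[OF permutes_inv[OF transport_permutes]]]]]
    by (simp add: S_def)
  moreover have "S \<subseteq> {..<n}"
    using occupied_subset[OF run T(1)] permutes_in_image[OF permutes_inv[OF transport_permutes]]
    unfolding S_def by auto
  moreover have "card L \<le> n"
    using card_mono[OF _ L(1)] by simp
  ultimately have "orbit period_perm j \<inter> S \<noteq> {}" if "j < n" for j
    using size[OF that] L(2) \<open>1 \<le> K\<close>
    by (intro Int_not_empty_if_card_gt[OF _ orbit_period_perm_subset[OF that]]) auto
  then show "covered n c f g loc"
    using covered_if_orbits_meet occ by blast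
qed

text \<open>The run in which exactly the robots of C leave, all at time 0. The positions
  of the survivors are computed along the reversed event list, so that each step can
  refer to the circles occupied before the event (see survivors_image).\<close>

primrec survivors_rev :: "nat set \<Rightarrow> real list \<Rightarrow> nat \<Rightarrow> nat" where
  "survivors_rev C [] = id"
| "survivors_rev C (e # es) =
     switch (link_swap e) (swaps (rev es) ` ({..<n} - C)) \<circ> survivors_rev C es"

definition survivors :: "nat set \<Rightarrow> real list \<Rightarrow> nat \<Rightarrow> nat" where
  "survivors C es = survivors_rev C (rev es)"

lemma survivors_Nil [simp]: "survivors C [] = id"
  by (simp add: survivors_def)

lemma survivors_snoc [simp]:
  "survivors C (es @ [e]) = switch (link_swap e) (swaps es ` ({..<n} - C)) \<circ> survivors C es"
  by (simp add: survivors_def)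

lemma survivors_image: "survivors C es ` ({..<n} - C) = swaps es ` ({..<n} - C)"
proof (induction es rule: rev_induct)
  case (snoc e es)
  have "survivors C (es @ [e]) ` ({..<n} - C)
      = switch (link_swap e) (swaps es ` ({..<n} - C)) ` survivors C es ` ({..<n} - C)"
    by (simp add: image_comp)
  also have "\<dots> = link_swap e ` swaps es ` ({..<n} - C)"
    unfolding snoc by (simp add: switch_image)
  finally show ?case by (simp add: image_comp)
qed simp

definition departure_run :: "nat set \<Rightarrow> nat \<Rightarrow> real \<Rightarrow> nat option" where
  "departure_run C m = (\<lambda>t. if m \<in> C then None else Some (survivors C (events 0 t) m))"

lemma departure_run_step:
  assumes "0 < t" "m \<notin> C"
  shows "departure_run C m t =
    Some (switch (link_swap t) {j. occupied_before n (departure_run C) j t}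
      (survivors C (events_before 0 t) m))"
proof -
  have leftval: "leftval (departure_run C m') t =
      (if m' \<in> C then None else Some (survivors C (events_before 0 t) m'))" for m'
    using leftval_events[OF assms(1), of "\<lambda>es. if m' \<in> C then None else Some (survivors C es m')"]
    by (simp add: departure_run_def)
  have "{j. occupied_before n (departure_run C) j t} = swaps (events_before 0 t) ` ({..<n} - C)"
    unfolding occupied_before_def leftval survivors_image[symmetric] by auto
  then show ?thesis
    using assms link_swap_not_link_time[of t]
    by (cases "t \<in> link_times") (auto simp: departure_run_def events_snoc switch_def)
qed

lemma departure_run_scs_run: "scs_run n c r f g C (\<lambda>_. 0) (departure_run C)"
  unfolding scs_run_def switching_rule_iff
proof (intro allI impI conjI)
  fix m assume "m < n"
  show "pwc 0 (departure_run C m)"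
    using pwc_events[of 0 "\<lambda>es. if m \<in> C then None else Some (survivors C es m)"]
    by (simp add: departure_run_def)
  show "departure_run C m t = None \<longleftrightarrow> m \<in> C \<and> 0 \<le> t" if "0 \<le> t" for t
    using that by (simp add: departure_run_def)
  show "departure_run C m 0 = Some m" if "\<not> (m \<in> C \<and> (0::real) \<le> 0)"
    using that by (simp add: departure_run_def)
next
  fix m t i assume "m < n" "0 < t" "departure_run C m t \<noteq> None"
    "leftval (departure_run C m) t = Some i"
  then have "m \<notin> C" "i = survivors C (events_before 0 t) m"
    using leftval_events[of 0 t "\<lambda>es. if m \<in> C then None else Some (survivors C es m)"]
    by (auto simp: departure_run_def split: if_splits)
  with \<open>0 < t\<close> show "departure_run C m t =
      Some (switch (link_swap t) {j. occupied_before n (departure_run C) j t} i)"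
    using departure_run_step by simp
qed

lemma not_resilient_closed_set:
  assumes C: "C \<subseteq> {..<n}" "period_perm ` C \<subseteq> C" "m0 \<in> C"
  shows "\<not> resilient n c r f g (card C)"
proof
  assume res: "resilient n c r f g (card C)"
  have "C \<subseteq> {..<n} \<and> card C \<le> card C \<and> (\<forall>m. (0::real) \<le> 0) \<and>
      scs_run n c r f g C (\<lambda>_. 0) (departure_run C)"
    using C(1) departure_run_scs_run by simp
  then have "covered n c f g (departure_run C)"
    by (rule res[unfolded resilient_def, rule_format])
  moreover have "m0 < n" "cmod (pos c f g m0 0 - c m0) = 1"
    using C by (auto simp: pos_def)
  ultimately obtain t m where tm: "0 \<le> t" "m < n" "departure_run C m t = Some m0"
      "pos c f g m0 t = pos c f g m0 0"
    unfolding covered_def by blast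
  then have "t \<in> \<int>" using pos_eq_start_iff[OF \<open>m0 < n\<close>] by blast
  then obtain w where w: "t = of_int w" by (auto elim: Ints_cases)
  define N where "N = nat w"
  have t: "t = of_nat N" using w tm(1) by (simp add: N_def)
  have "m0 \<in> survivors C (events 0 t) ` ({..<n} - C)"
    using tm(2,3) by (auto simp: departure_run_def split: if_splits)
  then have "m0 \<in> (period_perm ^^ N) ` ({..<n} - C)"
    using survivors_image transport_int_add_nat[of 0 N] by (simp add: t transport_def)
  moreover have "(period_perm ^^ N) ` C = C"
  proof (rule endo_inj_surj)
    show "(period_perm ^^ N) ` C \<subseteq> C"
      by (induction N) (use C(2) in auto)
  qed (use C(1) finite_subset
      inj_on_subset[OF inj_fn[OF permutes_inj[OF period_perm_permutes]] subset_UNIV] in auto)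
  ultimately show False
    using C(3) inj_fn[OF permutes_inj[OF period_perm_permutes], of N] by (auto simp: inj_def)
qed

end

lemma resilient_mono: "resilient n c r f g k' \<Longrightarrow> k \<le> k' \<Longrightarrow> resilient n c r f g k"
  unfolding resilient_def by (meson order_trans)

lemma uncovering_resilienceI:
  assumes "resilient n c r f g (k - 1)" "\<not> resilient n c r f g k" "1 \<le> k"
  shows "uncovering_resilience n c r f g (int k - 1)"
  unfolding uncovering_resilience_def
proof
  show "int k - 1 \<in> {int k' | k'. resilient n c r f g k'}"
    using assms(1,3) by (intro CollectI exI[of _ "k - 1"]) auto
  show "\<forall>y\<in>{int k' | k'. resilient n c r f g k'}. y \<le> int k - 1"
  proof
    fix y assume "y \<in> {int k' | k'. resilient n c r f g k'}"
    then obtain k' where k': "y = int k'" "resilient n c r f g k'" by blast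
    with assms(2) resilient_mono[of n c r f g k' k] have "k' < k" by (meson not_le)
    with k'(1) show "y \<le> int k - 1" by simp
  qed
qed

theorem lemma11:
  fixes n :: nat and c :: "nat \<Rightarrow> complex" and r :: real
    and f :: "nat \<Rightarrow> real" and g :: "nat \<Rightarrow> int" and k :: nat
  assumes "n \<ge> 1"
    and "r > 0"
    and disjoint: "\<forall>i<n. \<forall>j<n. i \<noteq> j \<longrightarrow> cmod (c i - c j) > 2"
    and distinct_links: "\<forall>i j j'. adj n c r i j \<and> adj n c r i j' \<and> j \<noteq> j' \<longrightarrow> linkpt c i j \<noteq> linkpt c i j'"
    and "sync_schedule n c r f g"
    and kmin: "min_ring_robots n c r f g k"
  shows "uncovering_resilience n c r f g (int k - 1)"
proof -
  interpret sync_system n c r f g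
    using distinct_links \<open>sync_schedule n c r f g\<close> by unfold_locales
  obtain j where j: "j < n" "card (orbit period_perm j) = k"
    and min: "\<And>j. j < n \<Longrightarrow> k \<le> card (orbit period_perm j)"
    using kmin unfolding min_ring_robots_iff by blast
  have "1 \<le> k"
    using card_orbit_period_perm_pos[OF j(1)] j(2) by simp
  moreover have "\<not> resilient n c r f g k"
    using not_resilient_closed_set[OF orbit_period_perm_subset[OF j(1)]
        _ permutation_self_in_orbit[OF permutation_period_perm]] j(2)
    by (simp add: permutation_orbit_step[OF permutation_period_perm] orbit.step image_subset_iff)
  ultimately show ?thesis
    using resilient_below_orbit_size[OF min] by (intro uncovering_resilienceI)
qed

end
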